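(* Let $N\ge2$, $x_1>x_2>\cdots>x_N$ be real, $\rho=\sum_{j=1}^N\rho_j\delta_{x_j}$ with $\rho_j>0$, $\sum\rho_j=1$, and $\rho_t=e^{2tx}d\rho(x)/\int e^{2tx}d\rho(x)$. Let $a_n(t)>0$ ($1\le n\le N-1$) and $b_n(t)$ ($1\le n\le N$) be the Jacobi parameters of $\rho_t$, defined by $xP_n(x)=P_{n+1}(x)+b_{n+1}P_n(x)+a_n^2P_{n-1}(x)$ for the monic orthogonal polynomials $P_n=P_n(\cdot;\rho_t)$ ($P_{-1}=0$, $P_0=1$). Then there are constants $C_3,C_4$ such that for all $t\ge0$, \[ |b_j(t)-x_j|\le C_3\bigl[e^{2t(x_{j+1}-x_j)}+e^{2t(x_j-x_{j-1})}\bigr]\quad(1\le j\le N), \] \[ |a_j(t)|\le C_4\bigl[e^{t(x_{j+2}-x_{j+1})}+e^{t(x_{j+1}-x_j)}+e^{t(x_j-x_{j-1})}\bigr]\quad(1\le j\le N-1), \] where any term involving $x_0$ or $x_{N+1}$ is omitted. *)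

theory Defs
  imports Complex_Main "HOL-Computational_Algebra.Polynomial"
begin

text \<open>Discrete measure rho = sum_{j=1..N} r j delta_{x j}; the tilted measure
rho_t has weights r j e^{2 t x j} / sum_k r k e^{2 t x k}.\<close>
definition tilt_w :: "nat \<Rightarrow> (nat \<Rightarrow> real) \<Rightarrow> (nat \<Rightarrow> real) \<Rightarrow> real \<Rightarrow> nat \<Rightarrow> real" where
  "tilt_w N x r t j = r j * exp (2 * t * x j) / (\<Sum>k=1..N. r k * exp (2 * t * x k))"

definition ip :: "nat \<Rightarrow> (nat \<Rightarrow> real) \<Rightarrow> (nat \<Rightarrow> real) \<Rightarrow> real poly \<Rightarrow> real poly \<Rightarrow> real" where
  "ip N x w p q = (\<Sum>j=1..N. w j * poly p (x j) * poly q (x j))"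

text \<open>n-th monic orthogonal polynomial P_n (meaningful for n \<le> N).\<close>
definition mop :: "nat \<Rightarrow> (nat \<Rightarrow> real) \<Rightarrow> (nat \<Rightarrow> real) \<Rightarrow> nat \<Rightarrow> real poly" where
  "mop N x w n = (THE p. degree p = n \<and> lead_coeff p = 1 \<and>
                        (\<forall>q. degree q < n \<longrightarrow> ip N x w p q = 0))"

definition mop_prev :: "nat \<Rightarrow> (nat \<Rightarrow> real) \<Rightarrow> (nat \<Rightarrow> real) \<Rightarrow> nat \<Rightarrow> real poly" where
  "mop_prev N x w n = (if n = 0 then 0 else mop N x w (n - 1))"

definition jacobi_b :: "nat \<Rightarrow> (nat \<Rightarrow> real) \<Rightarrow> (nat \<Rightarrow> real) \<Rightarrow> nat \<Rightarrow> real" where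
  "jacobi_b N x w m = (THE b. \<exists>c. [:0, 1:] * mop N x w (m - 1) =
       mop N x w m + smult b (mop N x w (m - 1)) + smult c (mop_prev N x w (m - 1)))"

definition jacobi_a :: "nat \<Rightarrow> (nat \<Rightarrow> real) \<Rightarrow> (nat \<Rightarrow> real) \<Rightarrow> nat \<Rightarrow> real" where
  "jacobi_a N x w n = (THE a. a > 0 \<and> (\<exists>b. [:0, 1:] * mop N x w n =
       mop N x w (n + 1) + smult b (mop N x w n) + smult (a\<^sup>2) (mop_prev N x w n)))"

end

theory Submission
  imports Defs
begin

(* Let P_n be the monic orthogonal polynomials of a measure with weights w_1, ..., w_N at
   distinct nodes x_1, ..., x_N, so that b_(n+1) = <x P_n, P_n> / |P_n|^2 and
   a_n^2 = |P_n|^2 / |P_(n-1)|^2.  If the weights are quasi-decreasing (w_b <= K w_a for a <= b),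
   then |P_n|^2 is comparable to w_(n+1): from above since P_n minimises the norm among monic
   polynomials of degree n and (X - x_1) ... (X - x_n) vanishes at the heavy nodes, from below
   since a monic polynomial of degree n cannot be small at all of x_1, ..., x_(n+1).  Lagrange
   interpolation then bounds P_n at every node, and orthogonality of P_n to the Lagrange basis of
   x_1, ..., x_n shows that w_k P_n(x_k) = O(w_(n+1)) for k <= n.  Consequently
   b_(n+1) - x_(n+1) = sum_l w_l (x_l - x_(n+1)) P_n(x_l)^2 / |P_n|^2 is bounded by the ratios
   w_l / w_(n+1) for l > n + 1 and w_(n+1) / w_l for l <= n, and a_n^2 by the ratios w_l / w_n
   for l > n.  For the tilted measure these ratios are at most e^(2t(x_b - x_a)) / min r. *)

section \<open>The inner product of a discrete measure\<close>

lemma ip_add_left [simp]: "ip N x w (p + q) s = ip N x w p s + ip N x w q s"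
  by (simp add: ip_def sum.distrib algebra_simps)

lemma ip_add_right [simp]: "ip N x w s (p + q) = ip N x w s p + ip N x w s q"
  by (simp add: ip_def sum.distrib algebra_simps)

lemma ip_diff_left: "ip N x w (p - q) s = ip N x w p s - ip N x w q s"
  by (simp add: ip_def sum_subtractf algebra_simps)

lemma ip_diff_right: "ip N x w s (p - q) = ip N x w s p - ip N x w s q"
  by (simp add: ip_def sum_subtractf algebra_simps)

lemma ip_smult_left [simp]: "ip N x w (smult c p) q = c * ip N x w p q"
  by (simp add: ip_def sum_distrib_left algebra_simps)

lemma ip_smult_right [simp]: "ip N x w p (smult c q) = c * ip N x w p q"
  by (simp add: ip_def sum_distrib_left algebra_simps)

lemma ip_zero_left [simp]: "ip N x w 0 q = 0"
  by (simp add: ip_def)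

lemma ip_zero_right [simp]: "ip N x w p 0 = 0"
  by (simp add: ip_def)

lemma ip_commute: "ip N x w p q = ip N x w q p"
  by (simp add: ip_def algebra_simps)

lemma ip_sum_left: "ip N x w (\<Sum>k\<in>A. f k) q = (\<Sum>k\<in>A. ip N x w (f k) q)"
  by (simp add: ip_def poly_sum sum_distrib_left sum_distrib_right sum.swap[of _ A] mult_ac)

lemma ip_pCons_0: "ip N x w (pCons 0 p) q = ip N x w p (pCons 0 q)"
  by (simp add: ip_def algebra_simps)

lemma ip_self: "ip N x w p p = (\<Sum>j=1..N. w j * (poly p (x j))\<^sup>2)"
  by (simp add: ip_def power2_eq_square mult.assoc)

lemma eq_or_degree_diff_less:
  fixes p q :: "'a::comm_ring_1 poly"
  assumes "degree p \<le> n" "degree q \<le> n" "coeff p n = coeff q n"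
  shows "p = q \<or> degree (p - q) < n"
proof (cases "p = q")
  case False
  then have "p - q \<noteq> 0" by simp
  then have "lead_coeff (p - q) \<noteq> 0" by (rule leading_coeff_neq_0)
  moreover have "coeff (p - q) n = 0" using assms(3) by simp
  ultimately have "degree (p - q) \<noteq> n" by metis
  with degree_diff_le[OF assms(1,2)] show ?thesis by simp
qed simp

section \<open>Node polynomials and Lagrange interpolation\<close>

definition node_poly :: "(nat \<Rightarrow> 'a::comm_ring_1) \<Rightarrow> nat set \<Rightarrow> 'a poly" where
  "node_poly x S = (\<Prod>i\<in>S. [:- x i, 1:])"

lemma degree_node_poly: "finite S \<Longrightarrow> degree (node_poly x S) = card S"
  for x :: "nat \<Rightarrow> 'a::idom"
  by (simp add: node_poly_def degree_prod_eq_sum_degree)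

lemma lead_coeff_node_poly [simp]: "lead_coeff (node_poly x S) = 1"
  for x :: "nat \<Rightarrow> 'a::idom"
  by (simp add: node_poly_def lead_coeff_prod)

lemma coeff_node_poly_card: "finite S \<Longrightarrow> coeff (node_poly x S) (card S) = 1"
  for x :: "nat \<Rightarrow> 'a::idom"
  using lead_coeff_node_poly[of x S] by (simp add: degree_node_poly)

lemma poly_node_poly: "poly (node_poly x S) y = (\<Prod>i\<in>S. y - x i)"
  by (simp add: node_poly_def poly_prod)

lemma poly_node_poly_node: "finite S \<Longrightarrow> k \<in> S \<Longrightarrow> poly (node_poly x S) (x k) = 0"
  unfolding poly_node_poly by (intro prod_zero) auto

lemma poly_node_poly_omitted_node:
  fixes x :: "nat \<Rightarrow> 'a::idom"
  assumes "finite S" "inj_on x S" "k \<in> S"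
  shows "poly (node_poly x (S - {k})) (x k) \<noteq> 0"
  using assms by (auto simp: poly_node_poly inj_on_def)

definition lagrange_basis :: "(nat \<Rightarrow> 'a::field) \<Rightarrow> nat set \<Rightarrow> nat \<Rightarrow> 'a poly" where
  "lagrange_basis x S k =
     smult (inverse (poly (node_poly x (S - {k})) (x k))) (node_poly x (S - {k}))"

context
  fixes x :: "nat \<Rightarrow> 'a::field" and S :: "nat set"
  assumes finite_S: "finite S" and inj_x: "inj_on x S"
begin

lemma poly_lagrange_basis:
  "k \<in> S \<Longrightarrow> l \<in> S \<Longrightarrow> poly (lagrange_basis x S k) (x l) = (if l = k then 1 else 0)"
  using poly_node_poly_omitted_node[OF finite_S inj_x] poly_node_poly_node[of "S - {k}" l x] finite_S
  by (auto simp: lagrange_basis_def)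

lemma degree_lagrange_basis: "k \<in> S \<Longrightarrow> degree (lagrange_basis x S k) = card S - 1"
  using poly_node_poly_omitted_node[OF finite_S inj_x] finite_S
  by (simp add: lagrange_basis_def degree_node_poly)

lemma coeff_lagrange_basis_top:
  "k \<in> S \<Longrightarrow> coeff (lagrange_basis x S k) (card S - 1) =
     inverse (poly (node_poly x (S - {k})) (x k))"
  using lead_coeff_node_poly[of x "S - {k}"] finite_S
  by (simp add: lagrange_basis_def degree_node_poly)

lemma lagrange_interpolation:
  assumes "p = 0 \<or> degree p < card S"
  shows "p = (\<Sum>k\<in>S. smult (poly p (x k)) (lagrange_basis x S k))"
proof (cases "S = {}")
  case True
  with assms show ?thesis by simp
next
  case False
  then have "card S \<noteq> 0" using finite_S by simp
  have "degree (\<Sum>k\<in>S. smult (poly p (x k)) (lagrange_basis x S k)) \<le> card S - 1"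
    by (intro degree_sum_le finite_S order.trans[OF degree_smult_le])
      (simp add: degree_lagrange_basis)
  moreover have "poly p (x l) = poly (\<Sum>k\<in>S. smult (poly p (x k)) (lagrange_basis x S k)) (x l)"
    if "l \<in> S" for l
    using that finite_S by (simp add: poly_sum poly_lagrange_basis if_distrib cong: if_cong)
  moreover have "degree p < card (x ` S)" "card S - 1 < card (x ` S)"
    using assms \<open>card S \<noteq> 0\<close> by (auto simp: card_image[OF inj_x])
  ultimately show ?thesis
    by (intro poly_eqI_degree[of "x ` S"]) auto
qed

end

lemma abs_poly_monic_le:
  fixes x :: "nat \<Rightarrow> 'a::linordered_field"
  assumes "finite S" "inj_on x S" "degree p = card S" "lead_coeff p = 1"
    and "\<And>k. k \<in> S \<Longrightarrow> \<bar>poly p (x k)\<bar> \<le> M"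
  shows "\<bar>poly p y\<bar> \<le> \<bar>poly (node_poly x S) y\<bar> + M * (\<Sum>k\<in>S. \<bar>poly (lagrange_basis x S k) y\<bar>)"
proof -
  define d where "d = p - node_poly x S"
  have "d = 0 \<or> degree d < card S"
    unfolding d_def using assms(1,3,4) eq_or_degree_diff_less[of p "card S" "node_poly x S"]
    by (auto simp: degree_node_poly coeff_node_poly_card)
  then have "d = (\<Sum>k\<in>S. smult (poly d (x k)) (lagrange_basis x S k))"
    by (rule lagrange_interpolation[OF assms(1,2)])
  then have "poly d y = (\<Sum>k\<in>S. poly d (x k) * poly (lagrange_basis x S k) y)"
    by (metis (no_types, lifting) poly_smult poly_sum sum.cong)
  also have "\<dots> = (\<Sum>k\<in>S. poly p (x k) * poly (lagrange_basis x S k) y)"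
    using assms(1) by (intro sum.cong) (simp_all add: d_def poly_node_poly_node)
  finally have "poly p y = poly (node_poly x S) y + (\<Sum>k\<in>S. poly p (x k) * poly (lagrange_basis x S k) y)"
    by (simp add: d_def)
  also have "\<bar>\<dots>\<bar> \<le> \<bar>poly (node_poly x S) y\<bar> +
      (\<Sum>k\<in>S. \<bar>poly p (x k)\<bar> * \<bar>poly (lagrange_basis x S k) y\<bar>)"
    by (rule order.trans[OF abs_triangle_ineq add_left_mono[OF order.trans[OF sum_abs]]])
      (simp add: abs_mult)
  also have "\<dots> \<le> \<bar>poly (node_poly x S) y\<bar> + M * (\<Sum>k\<in>S. \<bar>poly (lagrange_basis x S k) y\<bar>)"
    unfolding sum_distrib_left by (intro add_left_mono sum_mono mult_right_mono assms(5)) auto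
  finally show ?thesis .
qed

lemma monic_poly_large_at_node:
  fixes x :: "nat \<Rightarrow> 'a::linordered_field"
  assumes "finite S" "inj_on x S" "degree p + 1 = card S" "lead_coeff p = 1"
  shows "\<exists>k\<in>S. \<bar>poly (node_poly x (S - {k})) (x k)\<bar> \<le> of_nat (card S) * \<bar>poly p (x k)\<bar>"
proof (rule ccontr)
  assume none: "\<not> ?thesis"
  have small: "\<bar>poly p (x k) / poly (node_poly x (S - {k})) (x k)\<bar> < 1 / of_nat (card S)"
    if "k \<in> S" for k
  proof -
    have c: "0 < (of_nat (card S) :: 'a)" using assms(3) by simp
    have "of_nat (card S) * \<bar>poly p (x k)\<bar> < \<bar>poly (node_poly x (S - {k})) (x k)\<bar>"
      using none that by auto
    moreover have "0 \<le> of_nat (card S) * \<bar>poly p (x k)\<bar>" by simp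
    ultimately have "0 < \<bar>poly (node_poly x (S - {k})) (x k)\<bar>" by linarith
    with c \<open>of_nat (card S) * _ < _\<close> show ?thesis
      by (simp add: mult.commute pos_less_divide_eq)
  qed
  have interp: "p = (\<Sum>k\<in>S. smult (poly p (x k)) (lagrange_basis x S k))"
    by (rule lagrange_interpolation[OF assms(1,2)]) (use assms(3) in simp)
  have "1 = coeff p (card S - 1)"
    using assms(3,4) by (metis add_diff_cancel_right')
  also have "\<dots> = (\<Sum>k\<in>S. poly p (x k) * coeff (lagrange_basis x S k) (card S - 1))"
    using arg_cong[OF interp, of "\<lambda>q. coeff q (card S - 1)"] by (simp add: coeff_sum)
  also have "\<dots> = (\<Sum>k\<in>S. poly p (x k) / poly (node_poly x (S - {k})) (x k))"
    using coeff_lagrange_basis_top[OF assms(1,2)] by (simp add: divide_inverse)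
  also have "\<dots> \<le> (\<Sum>k\<in>S. \<bar>poly p (x k) / poly (node_poly x (S - {k})) (x k)\<bar>)"
    by (intro sum_mono abs_ge_self)
  also have "\<dots> < (\<Sum>k\<in>S. 1 / of_nat (card S))"
    using assms(1,3) small by (intro sum_strict_mono) auto
  also have "\<dots> = 1"
    using assms(3) by simp
  finally show False by simp
qed

section \<open>Monic orthogonal polynomials and the recurrence coefficients\<close>

definition is_mop :: "nat \<Rightarrow> (nat \<Rightarrow> real) \<Rightarrow> (nat \<Rightarrow> real) \<Rightarrow> nat \<Rightarrow> real poly \<Rightarrow> bool" where
  "is_mop N x w n p \<longleftrightarrow>
     degree p = n \<and> lead_coeff p = 1 \<and> (\<forall>q. degree q < n \<longrightarrow> ip N x w p q = 0)"

locale discrete_weights =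
  fixes N :: nat and x w :: "nat \<Rightarrow> real"
  assumes inj_nodes: "inj_on x {1..N}"
    and weights_pos: "\<And>j. j \<in> {1..N} \<Longrightarrow> 0 < w j"
begin

abbreviation P :: "nat \<Rightarrow> real poly" where
  "P n \<equiv> mop N x w n"

abbreviation sqnorm :: "nat \<Rightarrow> real" where
  "sqnorm n \<equiv> ip N x w (P n) (P n)"

lemma ip_self_nonneg: "0 \<le> ip N x w p p"
  unfolding ip_self using weights_pos by (auto intro!: sum_nonneg simp: less_imp_le)

lemma ip_self_pos:
  assumes "p \<noteq> 0" "degree p < N"
  shows "0 < ip N x w p p"
proof (rule ccontr)
  assume "\<not> ?thesis"
  then have "ip N x w p p = 0"
    using ip_self_nonneg[of p] by linarith
  then have "\<forall>j\<in>{1..N}. w j * (poly p (x j))\<^sup>2 = 0"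
    unfolding ip_self using weights_pos by (subst (asm) sum_nonneg_eq_0_iff) (auto simp: less_imp_le)
  then have "\<forall>j\<in>{1..N}. poly p (x j) = 0"
    using weights_pos by fastforce
  moreover have "card (x ` {1..N}) = N"
    using card_image[OF inj_nodes] by simp
  ultimately have "p = 0"
    using assms(2) by (intro poly_eqI_degree[of "x ` {1..N}"]) auto
  with assms(1) show False ..
qed

lemma ip_eq_0_if_orthogonal_to_mops:
  assumes "\<And>l. l < n \<Longrightarrow> is_mop N x w l (f l)" "\<And>l. l < n \<Longrightarrow> ip N x w p (f l) = 0"
    and "degree q < n"
  shows "ip N x w p q = 0"
  using assms(3)
proof (induction "degree q" arbitrary: q rule: less_induct)
  case less
  define d where "d = degree q"
  have "degree (f d) = d" "coeff (f d) d = 1"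
    using assms(1)[of d] less.prems by (auto simp: is_mop_def d_def)
  then have "q = smult (lead_coeff q) (f d) \<or> degree (q - smult (lead_coeff q) (f d)) < d"
    by (intro eq_or_degree_diff_less) (auto simp: d_def intro: order.trans[OF degree_smult_le])
  moreover have "ip N x w p q = ip N x w p (q - smult (lead_coeff q) (f d)) + lead_coeff q * ip N x w p (f d)"
    by (simp add: ip_diff_right)
  moreover have "ip N x w p (f d) = 0"
    using assms(2) less.prems by (simp add: d_def)
  ultimately show ?case
    using less.hyps[of "q - smult (lead_coeff q) (f d)"] less.prems by (auto simp: d_def)
qed

text \<open>Gram--Schmidt applied to the monomial of degree \<open>n\<close>.\<close>
lemma is_mop_exists: "n \<le> N \<Longrightarrow> \<exists>p. is_mop N x w n p"
proof (induction n rule: less_induct)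
  case (less n)
  then obtain f where f: "\<And>k. k < n \<Longrightarrow> is_mop N x w k (f k)"
    by (metis less_imp_le order.strict_trans2)
  have deg: "degree (f k) = k" if "k < n" for k
    using f[OF that] by (simp add: is_mop_def)
  have orth: "ip N x w (f k) (f l) = 0" if "k < n" "l < n" "k \<noteq> l" for k l
  proof (cases "l < k")
    case True
    then show ?thesis using f[OF that(1)] deg[OF that(2)] by (simp add: is_mop_def)
  next
    case False
    then show ?thesis
      using f[OF that(2)] deg[OF that(1)] that(3) ip_commute[of N x w "f k"] by (simp add: is_mop_def)
  qed
  have pos: "0 < ip N x w (f k) (f k)" if "k < n" for k
    using f[OF that] that less.prems by (intro ip_self_pos) (auto simp: is_mop_def)
  define c where "c k = ip N x w (monom 1 n) (f k) / ip N x w (f k) (f k)" for k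
  define p where "p = monom 1 n - (\<Sum>k<n. smult (c k) (f k))"
  have "ip N x w p (f l) = 0" if "l < n" for l
  proof -
    have "(\<Sum>k<n. c k * ip N x w (f k) (f l)) = c l * ip N x w (f l) (f l)"
      using that orth by (subst sum.remove[of _ l]) auto
    also have "\<dots> = ip N x w (monom 1 n) (f l)"
      using pos[OF that] by (simp add: c_def)
    finally show ?thesis
      by (simp add: p_def ip_diff_left ip_sum_left)
  qed
  then have "\<forall>q. degree q < n \<longrightarrow> ip N x w p q = 0"
    using f by (blast intro: ip_eq_0_if_orthogonal_to_mops)
  moreover have "degree (\<Sum>k<n. smult (c k) (f k)) \<le> n"
    by (intro degree_sum_le) (auto intro: order.trans[OF degree_smult_le] simp: deg)
  then have "degree p \<le> n"
    unfolding p_def by (intro degree_diff_le) (auto simp: degree_monom_le)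
  moreover have "coeff p n = 1"
    by (simp add: p_def coeff_sum coeff_eq_0 deg)
  ultimately show ?case
    unfolding is_mop_def by (metis le_antisym le_degree zero_neq_one)
qed

lemma is_mop_unique:
  assumes "n \<le> N" "is_mop N x w n p" "is_mop N x w n p'"
  shows "p = p'"
proof (rule ccontr)
  assume "p \<noteq> p'"
  with assms have "degree (p - p') < n"
    using eq_or_degree_diff_less[of p n p'] by (auto simp: is_mop_def)
  with assms(2,3) have "ip N x w p (p - p') = 0" "ip N x w p' (p - p') = 0"
    by (simp_all add: is_mop_def)
  then have "ip N x w (p - p') (p - p') = 0"
    by (simp add: ip_diff_left)
  moreover have "0 < ip N x w (p - p') (p - p')"
    using \<open>p \<noteq> p'\<close> \<open>degree (p - p') < n\<close> assms(1) by (intro ip_self_pos) auto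
  ultimately show False by simp
qed

lemma is_mop_P: "n \<le> N \<Longrightarrow> is_mop N x w n (P n)"
  unfolding mop_def is_mop_def[symmetric]
  using is_mop_exists is_mop_unique by (metis theI)

lemma degree_P: "n \<le> N \<Longrightarrow> degree (P n) = n"
  using is_mop_P unfolding is_mop_def by blast

lemma lead_coeff_P: "n \<le> N \<Longrightarrow> lead_coeff (P n) = 1"
  using is_mop_P unfolding is_mop_def by blast

lemma coeff_P_self [simp]: "n \<le> N \<Longrightarrow> coeff (P n) n = 1"
  using degree_P lead_coeff_P by metis

lemma ip_P_lower: "n \<le> N \<Longrightarrow> degree q < n \<Longrightarrow> ip N x w (P n) q = 0"
  using is_mop_P unfolding is_mop_def by blast

lemma ip_P_P:
  assumes "m \<le> N" "n \<le> N" "m \<noteq> n"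
  shows "ip N x w (P m) (P n) = 0"
proof (cases "n < m")
  case True
  then show ?thesis using assms by (simp add: ip_P_lower degree_P)
next
  case False
  then have "m < n" using assms(3) by simp
  then show ?thesis using assms by (metis ip_P_lower degree_P ip_commute)
qed

lemma P_nonzero: "n \<le> N \<Longrightarrow> P n \<noteq> 0"
  using lead_coeff_P by fastforce

lemma sqnorm_pos: "n < N \<Longrightarrow> 0 < sqnorm n"
  by (simp add: ip_self_pos P_nonzero degree_P)

lemma sqnorm_le_monic:
  assumes "n \<le> N" "degree q = n" "lead_coeff q = 1"
  shows "sqnorm n \<le> ip N x w q q"
proof -
  have "q = P n \<or> degree (q - P n) < n"
    using assms by (intro eq_or_degree_diff_less) (auto simp: degree_P lead_coeff_P)
  then have "ip N x w (P n) (q - P n) = 0"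
    using ip_P_lower[OF assms(1)] by auto
  then have "ip N x w q q = sqnorm n + ip N x w (q - P n) (q - P n)"
    by (simp add: ip_diff_left ip_diff_right ip_commute[of N x w q "P n"])
  then show ?thesis
    using ip_self_nonneg[of "q - P n"] by simp
qed

lemma eq_smult_P_if_orthogonal:
  assumes "m \<le> N" "degree q \<le> m" "\<And>p. degree p < m \<Longrightarrow> ip N x w q p = 0"
  shows "q = smult (coeff q m) (P m)"
proof (rule ccontr)
  define d where "d = q - smult (coeff q m) (P m)"
  assume "q \<noteq> smult (coeff q m) (P m)"
  moreover have "degree (smult (coeff q m) (P m)) \<le> m"
    using assms(1) by (intro order.trans[OF degree_smult_le]) (simp add: degree_P)
  ultimately have "d \<noteq> 0" "degree d < m"
    using assms eq_or_degree_diff_less[of q m "smult (coeff q m) (P m)"] by (auto simp: d_def)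
  have "ip N x w d p = 0" if "degree p < m" for p
    using assms(1,3) that by (simp add: d_def ip_diff_left ip_P_lower)
  then have "ip N x w d d = 0"
    using \<open>degree d < m\<close> by blast
  with \<open>d \<noteq> 0\<close> \<open>degree d < m\<close> show False
    using ip_self_pos[of d] assms(1) by simp
qed

text \<open>\<open>X * P k - P (Suc k)\<close> has degree at most \<open>k\<close> and, multiplication by \<open>X\<close> being
  self-adjoint, is orthogonal to all polynomials of degree below \<open>k - 1\<close>.\<close>
lemma three_term_recurrence:
  assumes "k < N"
  shows "\<exists>b c. [:0, 1:] * P k = P (Suc k) + smult b (P k) + smult c (mop_prev N x w k)"
proof -
  define q where "q = [:0, 1:] * P k - P (Suc k)"
  define r where "r = q - smult (coeff q k) (P k)"
  have "[:0, 1:] * P k = P (Suc k) \<or> degree q < Suc k"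
    unfolding q_def using assms P_nonzero[of k]
    by (intro eq_or_degree_diff_less) (auto simp: degree_P)
  then have "degree q \<le> k"
    by (auto simp: q_def)
  have "ip N x w q p = 0" if "Suc (degree p) < k" for p
  proof -
    have "degree ([:0, 1:] * p) < k"
      using that by (cases "p = 0") auto
    then show ?thesis
      using assms that by (simp add: q_def ip_diff_left ip_pCons_0 ip_P_lower)
  qed
  then have r_orth: "ip N x w r p = 0" if "Suc (degree p) < k" for p
    using assms that by (simp add: r_def ip_diff_left ip_P_lower)
  have "r = 0 \<or> degree r < k"
    using \<open>degree q \<le> k\<close> assms eq_or_degree_diff_less[of q k "smult (coeff q k) (P k)"]
    by (auto simp: r_def degree_P intro: order.trans[OF degree_smult_le])
  have "\<exists>c. r = smult c (mop_prev N x w k)"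
  proof (cases k)
    case 0
    with \<open>r = 0 \<or> degree r < k\<close> show ?thesis by simp
  next
    case (Suc m)
    then have "r = smult (coeff r m) (P m)"
      using assms \<open>r = 0 \<or> degree r < k\<close> r_orth by (intro eq_smult_P_if_orthogonal) auto
    then show ?thesis
      using Suc by (auto simp: mop_prev_def)
  qed
  then show ?thesis
    unfolding r_def q_def by (metis add.commute diff_add_cancel diff_diff_eq)
qed

lemma ip_X_P_prev:
  assumes "0 < n" "n \<le> N"
  shows "ip N x w ([:0, 1:] * P n) (P (n - 1)) = sqnorm n"
proof -
  obtain m where n: "n = Suc m"
    using assms(1) gr0_implies_Suc by blast
  have "[:0, 1:] * P m = P n \<or> degree ([:0, 1:] * P m - P n) < n"
    using assms(2) P_nonzero[of m] by (intro eq_or_degree_diff_less) (auto simp: n degree_P)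
  then have "ip N x w (P n) ([:0, 1:] * P m - P n) = 0"
    using ip_P_lower[OF assms(2)] by auto
  then show ?thesis
    by (simp add: n ip_diff_right ip_pCons_0 ip_commute[of N x w _ "P n"])
qed

lemma recurrence_coeffs:
  assumes "k < N" and rec: "[:0, 1:] * P k = P (Suc k) + smult b (P k) + smult c (mop_prev N x w k)"
  shows "b = ip N x w ([:0, 1:] * P k) (P k) / sqnorm k"
    and "0 < k \<Longrightarrow> c = sqnorm k / sqnorm (k - 1)"
proof -
  have "ip N x w (mop_prev N x w k) (P k) = 0"
    using assms(1) by (cases k) (simp_all add: mop_prev_def ip_P_P ip_commute[of N x w _ "P k"])
  then have "ip N x w ([:0, 1:] * P k) (P k) = b * sqnorm k"
    using assms(1) by (simp only: rec) (simp add: ip_P_P)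
  then show "b = ip N x w ([:0, 1:] * P k) (P k) / sqnorm k"
    using sqnorm_pos[OF assms(1)] by simp
next
  assume "0 < k"
  then have "sqnorm k = c * sqnorm (k - 1)"
    using assms(1) ip_X_P_prev[of k] by (simp only: rec) (simp add: mop_prev_def ip_P_P)
  moreover have "0 < sqnorm (k - 1)"
    using assms(1) by (intro sqnorm_pos) simp
  ultimately show "c = sqnorm k / sqnorm (k - 1)"
    by (simp add: field_simps)
qed

lemma jacobi_b_eq:
  assumes "k < N"
  shows "jacobi_b N x w (Suc k) = ip N x w ([:0, 1:] * P k) (P k) / sqnorm k"
proof -
  let ?rec = "\<lambda>b c. [:0, 1:] * P k = P (Suc k) + smult b (P k) + smult c (mop_prev N x w k)"
  have "(THE b. \<exists>c. ?rec b c) = ip N x w ([:0, 1:] * P k) (P k) / sqnorm k"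
  proof (rule the_equality)
    show "\<exists>c. ?rec (ip N x w ([:0, 1:] * P k) (P k) / sqnorm k) c"
      using three_term_recurrence[OF assms] recurrence_coeffs(1)[OF assms] by blast
  next
    show "b = ip N x w ([:0, 1:] * P k) (P k) / sqnorm k" if "\<exists>c. ?rec b c" for b
      using that recurrence_coeffs(1)[OF assms] by blast
  qed
  then show ?thesis
    by (simp add: jacobi_b_def)
qed

lemma jacobi_a_eq:
  assumes "0 < n" "n < N"
  shows "jacobi_a N x w n = sqrt (sqnorm n / sqnorm (n - 1))"
proof -
  let ?rec = "\<lambda>b c. [:0, 1:] * P n = P (n + 1) + smult b (P n) + smult c (mop_prev N x w n)"
  have "(THE a. 0 < a \<and> (\<exists>b. ?rec b (a\<^sup>2))) = sqrt (sqnorm n / sqnorm (n - 1))"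
  proof (rule the_equality)
    obtain b c where "?rec b c"
      using three_term_recurrence[OF assms(2)] by auto
    moreover have "c = sqnorm n / sqnorm (n - 1)"
      using recurrence_coeffs(2)[OF assms(2) _ assms(1)] calculation by simp
    moreover have "0 < sqnorm n / sqnorm (n - 1)"
      using sqnorm_pos assms by simp
    ultimately show "0 < sqrt (sqnorm n / sqnorm (n - 1)) \<and>
        (\<exists>b. ?rec b ((sqrt (sqnorm n / sqnorm (n - 1)))\<^sup>2))"
      by auto
  next
    fix a assume "0 < a \<and> (\<exists>b. ?rec b (a\<^sup>2))"
    then have "0 < a" "a\<^sup>2 = sqnorm n / sqnorm (n - 1)"
      using recurrence_coeffs(2)[OF assms(2) _ assms(1)] by auto
    then show "a = sqrt (sqnorm n / sqnorm (n - 1))"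
      by (simp add: real_sqrt_unique)
  qed
  then show ?thesis
    by (simp add: jacobi_a_def)
qed

end

section \<open>Bounds for quasi-decreasing weights\<close>

definition node_sqnorm :: "nat \<Rightarrow> (nat \<Rightarrow> real) \<Rightarrow> nat \<Rightarrow> real" where
  "node_sqnorm N x n = (\<Sum>l=1..N. (poly (node_poly x {1..n}) (x l))\<^sup>2)"

text \<open>By \<open>monic_poly_large_at_node\<close>, every monic polynomial \<open>p\<close> of degree \<open>n\<close> satisfies
  \<open>monic_lower_bound x n \<le> (poly p (x k))\<^sup>2\<close> at some \<open>k \<in> {1..Suc n}\<close>.\<close>
definition monic_lower_bound :: "(nat \<Rightarrow> real) \<Rightarrow> nat \<Rightarrow> real" where
  "monic_lower_bound x n =
     Min ((\<lambda>k. (poly (node_poly x ({1..Suc n} - {k})) (x k) / real (Suc n))\<^sup>2) ` {1..Suc n})"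

definition lebesgue_sum :: "nat \<Rightarrow> (nat \<Rightarrow> real) \<Rightarrow> nat \<Rightarrow> real" where
  "lebesgue_sum N x n = (\<Sum>l=1..N. \<Sum>k=1..n. \<bar>poly (lagrange_basis x {1..n} k) (x l)\<bar>)"

definition mop_value_bound :: "nat \<Rightarrow> (nat \<Rightarrow> real) \<Rightarrow> real \<Rightarrow> nat \<Rightarrow> real" where
  "mop_value_bound N x K n = sqrt (node_sqnorm N x n) * (1 + K * lebesgue_sum N x n)"

lemma node_sqnorm_nonneg: "0 \<le> node_sqnorm N x n"
  by (simp add: node_sqnorm_def sum_nonneg)

lemma lebesgue_sum_nonneg: "0 \<le> lebesgue_sum N x n"
  by (simp add: lebesgue_sum_def sum_nonneg)

lemma mop_value_bound_nonneg: "0 \<le> K \<Longrightarrow> 0 \<le> mop_value_bound N x K n"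
  by (simp add: mop_value_bound_def node_sqnorm_nonneg lebesgue_sum_nonneg)

lemma monic_lower_bound_nonneg: "0 \<le> monic_lower_bound x n"
  by (simp add: monic_lower_bound_def)

context discrete_weights
begin

lemma inj_on_nodes_subset: "S \<subseteq> {1..N} \<Longrightarrow> inj_on x S"
  using inj_nodes by (rule inj_on_subset)

lemma weighted_sq_le_sqnorm: "l \<in> {1..N} \<Longrightarrow> w l * (poly (P n) (x l))\<^sup>2 \<le> sqnorm n"
  unfolding ip_self using weights_pos by (intro member_le_sum) (auto simp: less_imp_le)

text \<open>\<open>P n\<close> minimises the norm among monic polynomials of degree \<open>n\<close>; comparing with the
  node polynomial of \<open>x 1, \<dots>, x n\<close> leaves only the weights beyond \<open>n\<close>.\<close>
lemma sqnorm_le_tail_weights: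
  assumes "n \<le> N" "0 \<le> E" "\<And>l. l \<in> {Suc n..N} \<Longrightarrow> w l \<le> E"
  shows "sqnorm n \<le> E * node_sqnorm N x n"
proof -
  have "sqnorm n \<le> ip N x w (node_poly x {1..n}) (node_poly x {1..n})"
    using assms(1) coeff_node_poly_card[where S="{1..n}" and x=x]
    by (intro sqnorm_le_monic) (simp_all add: degree_node_poly)
  also have "\<dots> \<le> (\<Sum>l=1..N. E * (poly (node_poly x {1..n}) (x l))\<^sup>2)"
    unfolding ip_self
  proof (intro sum_mono)
    fix l assume "l \<in> {1..N}"
    then show "w l * (poly (node_poly x {1..n}) (x l))\<^sup>2 \<le> E * (poly (node_poly x {1..n}) (x l))\<^sup>2"
      using assms(2) assms(3)[of l] by (cases "l \<le> n") (auto simp: poly_node_poly_node intro: mult_right_mono)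
  qed
  finally show ?thesis
    by (simp add: node_sqnorm_def sum_distrib_left)
qed

lemma monic_lower_bound_pos: "n < N \<Longrightarrow> 0 < monic_lower_bound x n"
  unfolding monic_lower_bound_def
  using poly_node_poly_omitted_node[of "{1..Suc n}" x] inj_on_nodes_subset[of "{1..Suc n}"]
  by auto

lemma weighted_poly_P_first_node_eq:
  assumes "n \<le> N" "k \<in> {1..n}"
  shows "w k * poly (P n) (x k) =
    - (\<Sum>l=Suc n..N. w l * poly (P n) (x l) * poly (lagrange_basis x {1..n} k) (x l))"
proof -
  define L where "L = lagrange_basis x {1..n} k"
  define f where "f l = w l * poly (P n) (x l) * poly L (x l)" for l
  have inj: "inj_on x {1..n}"
    using assms by (intro inj_on_nodes_subset) auto
  have "degree L < n"
    unfolding L_def using degree_lagrange_basis[OF _ inj] assms(2) by simp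
  then have "0 = (\<Sum>l=1..N. f l)"
    using assms(1) ip_P_lower[of n L] by (simp add: ip_def f_def)
  also have "\<dots> = (\<Sum>l=1..n. f l) + (\<Sum>l=Suc n..N. f l)"
    using assms(1) by (subst sum.union_disjoint[symmetric]) (auto intro: sum.cong)
  moreover have "(\<Sum>l=1..n. f l) = (\<Sum>l=1..n. if l = k then w k * poly (P n) (x k) else 0)"
    using poly_lagrange_basis[OF _ inj] assms(2) by (intro sum.cong) (auto simp: f_def L_def)
  ultimately show ?thesis
    using assms(2) by (simp add: f_def L_def)
qed

end

locale quasi_decreasing_weights = discrete_weights +
  fixes K :: real
  assumes weights_quasi_decreasing: "\<And>a b. 1 \<le> a \<Longrightarrow> a \<le> b \<Longrightarrow> b \<le> N \<Longrightarrow> w b \<le> K * w a"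
begin

lemma K_ge_1: "0 < N \<Longrightarrow> 1 \<le> K"
  using weights_quasi_decreasing[of 1 1] weights_pos[of 1] by simp

lemma sqnorm_ge:
  assumes "n < N"
  shows "w (Suc n) / K * monic_lower_bound x n \<le> sqnorm n"
proof -
  obtain k where k: "k \<in> {1..Suc n}"
    and "\<bar>poly (node_poly x ({1..Suc n} - {k})) (x k)\<bar> \<le> real (Suc n) * \<bar>poly (P n) (x k)\<bar>"
    using monic_poly_large_at_node[of "{1..Suc n}" x "P n"] assms inj_on_nodes_subset[of "{1..Suc n}"]
    by (auto simp: degree_P lead_coeff_P)
  then have "\<bar>poly (node_poly x ({1..Suc n} - {k})) (x k) / real (Suc n)\<bar> \<le> \<bar>poly (P n) (x k)\<bar>"
    by (simp add: divide_le_eq mult.commute)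
  then have "(poly (node_poly x ({1..Suc n} - {k})) (x k) / real (Suc n))\<^sup>2 \<le> (poly (P n) (x k))\<^sup>2"
    by (simp only: abs_le_square_iff)
  then have "monic_lower_bound x n \<le> (poly (P n) (x k))\<^sup>2"
    unfolding monic_lower_bound_def using k by (intro order.trans[OF Min_le]) auto
  have "1 \<le> K" using assms K_ge_1 by simp
  have "k \<in> {1..N}" using k assms by simp
  have "w (Suc n) / K \<le> w k"
    using weights_quasi_decreasing[of k "Suc n"] k assms \<open>1 \<le> K\<close> by (simp add: divide_le_eq mult.commute)
  then have "w (Suc n) / K * monic_lower_bound x n \<le> w k * (poly (P n) (x k))\<^sup>2"
    using \<open>monic_lower_bound x n \<le> _\<close> weights_pos[OF \<open>k \<in> {1..N}\<close>] monic_lower_bound_nonneg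
    by (intro mult_mono) auto
  also have "\<dots> \<le> sqnorm n"
    using \<open>k \<in> {1..N}\<close> by (rule weighted_sq_le_sqnorm)
  finally show ?thesis .
qed

lemma abs_poly_P_le_at_first_nodes:
  assumes "n < N" "k \<in> {1..Suc n}"
  shows "\<bar>poly (P n) (x k)\<bar> \<le> K * sqrt (node_sqnorm N x n)"
proof -
  have "1 \<le> K" using assms K_ge_1 by simp
  have "0 < w k" using assms weights_pos by simp
  have "w k * (poly (P n) (x k))\<^sup>2 \<le> sqnorm n"
    using assms by (intro weighted_sq_le_sqnorm) auto
  also have "\<dots> \<le> K * w (Suc n) * node_sqnorm N x n"
    using assms \<open>1 \<le> K\<close> weights_pos[of "Suc n"] weights_quasi_decreasing[of "Suc n"]
    by (intro sqnorm_le_tail_weights) auto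
  also have "\<dots> \<le> K * (K * w k) * node_sqnorm N x n"
    using assms \<open>1 \<le> K\<close> weights_quasi_decreasing[of k "Suc n"] node_sqnorm_nonneg
    by (intro mult_right_mono mult_left_mono) auto
  finally have "w k * (poly (P n) (x k))\<^sup>2 \<le> w k * (K * sqrt (node_sqnorm N x n))\<^sup>2"
    using node_sqnorm_nonneg by (simp add: power_mult_distrib power2_eq_square mult_ac)
  then have "(poly (P n) (x k))\<^sup>2 \<le> (K * sqrt (node_sqnorm N x n))\<^sup>2"
    using \<open>0 < w k\<close> by simp
  moreover have "0 \<le> K * sqrt (node_sqnorm N x n)"
    using \<open>1 \<le> K\<close> by (simp add: node_sqnorm_nonneg)
  ultimately show ?thesis
    by (metis abs_le_square_iff abs_of_nonneg)
qed

text \<open>Interpolating \<open>P n\<close> at \<open>x 1, \<dots>, x n\<close> transfers the bound at these nodes to all nodes.\<close>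
lemma abs_poly_P_le:
  assumes "n < N" "l \<in> {1..N}"
  shows "\<bar>poly (P n) (x l)\<bar> \<le> mop_value_bound N x K n"
proof -
  have "1 \<le> K" using assms K_ge_1 by simp
  have "\<bar>poly (P n) (x l)\<bar> \<le> \<bar>poly (node_poly x {1..n}) (x l)\<bar> +
      K * sqrt (node_sqnorm N x n) * (\<Sum>k=1..n. \<bar>poly (lagrange_basis x {1..n} k) (x l)\<bar>)"
    using assms abs_poly_P_le_at_first_nodes[OF assms(1)] inj_on_nodes_subset[of "{1..n}"]
    by (intro abs_poly_monic_le) (auto simp: degree_P lead_coeff_P)
  also have "\<dots> \<le> sqrt (node_sqnorm N x n) + K * sqrt (node_sqnorm N x n) * lebesgue_sum N x n"
  proof (intro add_mono mult_left_mono)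
    have "(poly (node_poly x {1..n}) (x l))\<^sup>2 \<le> node_sqnorm N x n"
      unfolding node_sqnorm_def using assms(2) by (intro member_le_sum) auto
    then show "\<bar>poly (node_poly x {1..n}) (x l)\<bar> \<le> sqrt (node_sqnorm N x n)"
      by (simp add: real_le_rsqrt)
    show "(\<Sum>k=1..n. \<bar>poly (lagrange_basis x {1..n} k) (x l)\<bar>) \<le> lebesgue_sum N x n"
      unfolding lebesgue_sum_def using assms(2) by (intro member_le_sum sum_nonneg) auto
  qed (use \<open>1 \<le> K\<close> in \<open>simp add: node_sqnorm_nonneg\<close>)
  finally show ?thesis
    by (simp add: mop_value_bound_def algebra_simps)
qed

lemma weighted_abs_poly_P_le_at_first_nodes:
  assumes "n < N" "k \<in> {1..n}"
  shows "w k * \<bar>poly (P n) (x k)\<bar> \<le> K * mop_value_bound N x K n * lebesgue_sum N x n * w (Suc n)"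
proof -
  define L where "L = lagrange_basis x {1..n} k"
  define B where "B = mop_value_bound N x K n"
  have "1 \<le> K" using assms K_ge_1 by simp
  have "0 \<le> B" unfolding B_def using \<open>1 \<le> K\<close> by (simp add: mop_value_bound_nonneg)
  have "0 < w (Suc n)" using assms weights_pos by simp
  have "w k * \<bar>poly (P n) (x k)\<bar> = \<bar>w k * poly (P n) (x k)\<bar>"
    using assms weights_pos[of k] by (simp add: abs_mult)
  also have "\<dots> = \<bar>\<Sum>l=Suc n..N. w l * poly (P n) (x l) * poly L (x l)\<bar>"
    using weighted_poly_P_first_node_eq[of n k] assms by (simp add: L_def)
  also have "\<dots> \<le> (\<Sum>l=Suc n..N. K * w (Suc n) * B * \<bar>poly L (x l)\<bar>)"
  proof (rule order.trans[OF sum_abs sum_mono])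
    fix l assume "l \<in> {Suc n..N}"
    then have "w l \<le> K * w (Suc n)" "\<bar>poly (P n) (x l)\<bar> \<le> B" "0 < w l"
      using assms weights_quasi_decreasing[of "Suc n" l] abs_poly_P_le[of n l] weights_pos[of l]
      by (auto simp: B_def)
    then show "\<bar>w l * poly (P n) (x l) * poly L (x l)\<bar> \<le> K * w (Suc n) * B * \<bar>poly L (x l)\<bar>"
      by (auto simp: abs_mult intro!: mult_right_mono mult_mono)
  qed
  also have "\<dots> \<le> (\<Sum>l=1..N. K * w (Suc n) * B * \<bar>poly L (x l)\<bar>)"
    using \<open>0 \<le> B\<close> \<open>1 \<le> K\<close> \<open>0 < w (Suc n)\<close> by (intro sum_mono2) auto
  also have "\<dots> \<le> K * w (Suc n) * B * lebesgue_sum N x n"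
    unfolding sum_distrib_left[symmetric] lebesgue_sum_def L_def
    using \<open>0 \<le> B\<close> \<open>1 \<le> K\<close> \<open>0 < w (Suc n)\<close> assms
    by (intro mult_left_mono sum_mono member_le_sum) auto
  finally show ?thesis
    by (simp add: B_def mult_ac)
qed

lemma weighted_sq_P_le_at_first_nodes:
  assumes "n < N" "l \<in> {1..n}" "w (Suc n) \<le> e * w l"
  shows "w l * (poly (P n) (x l))\<^sup>2 \<le> (K * mop_value_bound N x K n * lebesgue_sum N x n)\<^sup>2 * e * w (Suc n)"
proof -
  define M where "M = K * mop_value_bound N x K n * lebesgue_sum N x n"
  have "0 < w l" "0 < w (Suc n)" using assms weights_pos by auto
  have "w l * \<bar>poly (P n) (x l)\<bar> \<le> M * w (Suc n)"
    unfolding M_def using assms(1,2) by (rule weighted_abs_poly_P_le_at_first_nodes)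
  then have "(w l * \<bar>poly (P n) (x l)\<bar>)\<^sup>2 \<le> (M * w (Suc n))\<^sup>2"
    using \<open>0 < w l\<close> by (intro power_mono) auto
  then have "w l * (w l * (poly (P n) (x l))\<^sup>2) \<le> M\<^sup>2 * w (Suc n) * w (Suc n)"
    by (simp add: power_mult_distrib power2_eq_square mult_ac)
  also have "\<dots> \<le> M\<^sup>2 * w (Suc n) * (e * w l)"
    using assms(3) \<open>0 < w (Suc n)\<close> by (intro mult_left_mono) auto
  also have "\<dots> = w l * (M\<^sup>2 * e * w (Suc n))"
    by (simp add: mult_ac)
  finally show ?thesis
    using \<open>0 < w l\<close> by (simp add: M_def)
qed

end

definition jacobi_b_const :: "nat \<Rightarrow> (nat \<Rightarrow> real) \<Rightarrow> real \<Rightarrow> nat \<Rightarrow> real" where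
  "jacobi_b_const N x K n =
     K * (\<Sum>l=1..N. \<bar>x l - x (Suc n)\<bar>) * (mop_value_bound N x K n)\<^sup>2 *
       (1 + (K * lebesgue_sum N x n)\<^sup>2) / monic_lower_bound x n"

definition jacobi_a_const :: "nat \<Rightarrow> (nat \<Rightarrow> real) \<Rightarrow> real \<Rightarrow> nat \<Rightarrow> real" where
  "jacobi_a_const N x K n = sqrt (K * node_sqnorm N x n / monic_lower_bound x (n - 1))"

lemma jacobi_b_const_nonneg: "0 \<le> K \<Longrightarrow> 0 \<le> jacobi_b_const N x K n"
  by (simp add: jacobi_b_const_def monic_lower_bound_nonneg sum_nonneg)

lemma jacobi_a_const_nonneg: "0 \<le> K \<Longrightarrow> 0 \<le> jacobi_a_const N x K n"
  by (simp add: jacobi_a_const_def node_sqnorm_nonneg monic_lower_bound_nonneg)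

context quasi_decreasing_weights
begin

lemma weighted_sq_P_le_off_diagonal:
  assumes "n < N" "l \<in> {1..N}" "l \<noteq> Suc n" "0 \<le> e1" "0 \<le> e2"
    and "\<And>l. l \<in> {Suc (Suc n)..N} \<Longrightarrow> w l \<le> e1 * w (Suc n)"
    and "\<And>l. l \<in> {1..n} \<Longrightarrow> w (Suc n) \<le> e2 * w l"
  shows "w l * (poly (P n) (x l))\<^sup>2 \<le>
    (mop_value_bound N x K n)\<^sup>2 * (1 + (K * lebesgue_sum N x n)\<^sup>2) * (e1 + e2) * w (Suc n)"
proof -
  define B where "B = mop_value_bound N x K n"
  define c where "c = B\<^sup>2 * (1 + (K * lebesgue_sum N x n)\<^sup>2)"
  have "1 \<le> K" using assms K_ge_1 by simp
  have "0 < w l" "0 < w (Suc n)" using assms weights_pos by auto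
  have "0 \<le> B" using \<open>1 \<le> K\<close> by (simp add: B_def mop_value_bound_nonneg)
  have "B\<^sup>2 * 1 \<le> c" "B\<^sup>2 * (K * lebesgue_sum N x n)\<^sup>2 \<le> c"
    unfolding c_def by (intro mult_left_mono; simp)+
  have le_c: "u * e * w (Suc n) \<le> c * (e1 + e2) * w (Suc n)" if "u \<le> c" "0 \<le> e" "e \<le> e1 + e2" for u e
    using that \<open>0 < w (Suc n)\<close> by (intro mult_right_mono mult_mono) (auto simp: c_def)
  consider "Suc n < l" | "l \<le> n" using assms(3) by linarith
  then show ?thesis
  proof cases
    case 1
    have "\<bar>poly (P n) (x l)\<bar> \<le> B"
      unfolding B_def using assms(1,2) by (rule abs_poly_P_le)
    then have "(poly (P n) (x l))\<^sup>2 \<le> B\<^sup>2"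
      using \<open>0 \<le> B\<close> by (metis abs_le_square_iff abs_of_nonneg)
    moreover have "w l \<le> e1 * w (Suc n)"
      using 1 assms(2,6) by simp
    ultimately have "w l * (poly (P n) (x l))\<^sup>2 \<le> (e1 * w (Suc n)) * B\<^sup>2"
      using \<open>0 < w l\<close> by (intro mult_mono) auto
    also have "\<dots> = B\<^sup>2 * e1 * w (Suc n)"
      by (simp add: mult_ac)
    also have "\<dots> \<le> c * (e1 + e2) * w (Suc n)"
      using assms(4,5) \<open>B\<^sup>2 * 1 \<le> c\<close> by (intro le_c) simp_all
    finally show ?thesis by (simp add: c_def B_def)
  next
    case 2
    then have "w l * (poly (P n) (x l))\<^sup>2 \<le> (K * B * lebesgue_sum N x n)\<^sup>2 * e2 * w (Suc n)"
      unfolding B_def using assms by (intro weighted_sq_P_le_at_first_nodes) auto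
    also have "\<dots> \<le> c * (e1 + e2) * w (Suc n)"
      using assms(4,5) \<open>B\<^sup>2 * (K * lebesgue_sum N x n)\<^sup>2 \<le> c\<close>
      by (intro le_c) (simp_all add: power_mult_distrib mult_ac)
    finally show ?thesis by (simp add: c_def B_def)
  qed
qed

lemma abs_jacobi_b_sub_node_le:
  assumes "n < N" "0 \<le> e1" "0 \<le> e2"
    and "\<And>l. l \<in> {Suc (Suc n)..N} \<Longrightarrow> w l \<le> e1 * w (Suc n)"
    and "\<And>l. l \<in> {1..n} \<Longrightarrow> w (Suc n) \<le> e2 * w l"
  shows "\<bar>jacobi_b N x w (Suc n) - x (Suc n)\<bar> \<le> jacobi_b_const N x K n * (e1 + e2)"
proof -
  define c where "c = (mop_value_bound N x K n)\<^sup>2 * (1 + (K * lebesgue_sum N x n)\<^sup>2)"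
  define D where "D = (\<Sum>l=1..N. \<bar>x l - x (Suc n)\<bar>)"
  define T where "T l = (x l - x (Suc n)) * (w l * (poly (P n) (x l))\<^sup>2)" for l
  have "1 \<le> K" using assms K_ge_1 by simp
  have "0 < w (Suc n)" using assms weights_pos by simp
  have "0 < sqnorm n" using assms(1) by (rule sqnorm_pos)
  have "0 < monic_lower_bound x n" using assms(1) by (rule monic_lower_bound_pos)
  have T_le: "\<bar>T l\<bar> \<le> \<bar>x l - x (Suc n)\<bar> * (c * (e1 + e2) * w (Suc n))" if "l \<in> {1..N}" for l
  proof (cases "l = Suc n")
    case True
    then show ?thesis
      using \<open>0 < w (Suc n)\<close> assms(2,3) by (simp add: T_def c_def)
  next
    case False
    then show ?thesis
      using weighted_sq_P_le_off_diagonal[OF assms(1) that False assms(2-5)] weights_pos[OF that]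
      unfolding T_def c_def by (simp add: abs_mult mult_left_mono)
  qed
  have "ip N x w ([:0, 1:] * P n) (P n) - x (Suc n) * sqnorm n = (\<Sum>l=1..N. T l)"
    by (simp add: T_def ip_def sum_distrib_left sum_subtractf[symmetric] algebra_simps power2_eq_square)
  then have "jacobi_b N x w (Suc n) - x (Suc n) = (\<Sum>l=1..N. T l) / sqnorm n"
    using jacobi_b_eq[OF assms(1)] \<open>0 < sqnorm n\<close> by (simp add: field_simps)
  then have "\<bar>jacobi_b N x w (Suc n) - x (Suc n)\<bar> = \<bar>\<Sum>l=1..N. T l\<bar> / sqnorm n"
    using \<open>0 < sqnorm n\<close> by (simp only: abs_divide abs_of_pos)
  also have "\<dots> \<le> D * (c * (e1 + e2) * w (Suc n)) / (w (Suc n) / K * monic_lower_bound x n)"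
  proof (rule frac_le)
    show "\<bar>\<Sum>l=1..N. T l\<bar> \<le> D * (c * (e1 + e2) * w (Suc n))"
      unfolding D_def sum_distrib_right by (rule order.trans[OF sum_abs sum_mono[OF T_le]])
    show "w (Suc n) / K * monic_lower_bound x n \<le> sqnorm n"
      using assms(1) by (rule sqnorm_ge)
  qed (use \<open>0 < w (Suc n)\<close> \<open>1 \<le> K\<close> \<open>0 < monic_lower_bound x n\<close> assms(2,3)
      in \<open>simp_all add: D_def c_def sum_nonneg\<close>)
  also have "\<dots> = jacobi_b_const N x K n * (e1 + e2)"
    using \<open>0 < w (Suc n)\<close> \<open>1 \<le> K\<close> \<open>0 < monic_lower_bound x n\<close>
    by (simp add: jacobi_b_const_def D_def c_def field_simps)
  finally show ?thesis .
qed

lemma abs_jacobi_a_le: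
  assumes "0 < n" "n < N" "0 \<le> e" "\<And>l. l \<in> {Suc n..N} \<Longrightarrow> w l \<le> e * w n"
  shows "\<bar>jacobi_a N x w n\<bar> \<le> jacobi_a_const N x K n * sqrt e"
proof -
  have "1 \<le> K" using assms K_ge_1 by simp
  have "0 < w n" using assms weights_pos by simp
  have "0 < monic_lower_bound x (n - 1)" using assms by (intro monic_lower_bound_pos) simp
  have "0 < sqnorm n" "0 < sqnorm (n - 1)" using assms by (simp_all add: sqnorm_pos)
  have "sqnorm n \<le> e * w n * node_sqnorm N x n"
    using assms \<open>0 < w n\<close> by (intro sqnorm_le_tail_weights) auto
  moreover have "w n / K * monic_lower_bound x (n - 1) \<le> sqnorm (n - 1)"
    using sqnorm_ge[of "n - 1"] assms by simp
  ultimately have "sqnorm n / sqnorm (n - 1) \<le> e * w n * node_sqnorm N x n / (w n / K * monic_lower_bound x (n - 1))"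
    using \<open>0 < sqnorm n\<close> \<open>0 < w n\<close> \<open>1 \<le> K\<close> \<open>0 < monic_lower_bound x (n - 1)\<close> assms(3)
      node_sqnorm_nonneg
    by (intro frac_le) auto
  also have "\<dots> = K * node_sqnorm N x n / monic_lower_bound x (n - 1) * e"
    using \<open>0 < w n\<close> \<open>1 \<le> K\<close> by (simp add: field_simps)
  finally have "sqrt (sqnorm n / sqnorm (n - 1)) \<le> jacobi_a_const N x K n * sqrt e"
    unfolding jacobi_a_const_def real_sqrt_mult[symmetric] by (rule real_sqrt_le_mono)
  then show ?thesis
    using jacobi_a_eq[OF assms(1,2)] \<open>0 < sqnorm n\<close> \<open>0 < sqnorm (n - 1)\<close> by simp
qed

end

section \<open>Tilted measures\<close>

locale tilted_measure =
  fixes N :: nat and x r :: "nat \<Rightarrow> real"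
  assumes nodes_decreasing: "\<And>i j. 1 \<le> i \<Longrightarrow> i < j \<Longrightarrow> j \<le> N \<Longrightarrow> x j < x i"
    and masses_pos: "\<And>j. 1 \<le> j \<Longrightarrow> j \<le> N \<Longrightarrow> 0 < r j"
    and masses_sum: "(\<Sum>j=1..N. r j) = 1"
begin

definition inv_min_mass :: real where
  "inv_min_mass = 1 / Min (r ` {1..N})"

definition jacobi_b_rate_const :: real where
  "jacobi_b_rate_const = inv_min_mass * (\<Sum>n<N. jacobi_b_const N x inv_min_mass n)"

definition jacobi_a_rate_const :: real where
  "jacobi_a_rate_const = sqrt inv_min_mass * (\<Sum>n<N. jacobi_a_const N x inv_min_mass n)"

lemma inv_min_mass_pos: "0 < N \<Longrightarrow> 0 < inv_min_mass"
  unfolding inv_min_mass_def using masses_pos by simp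

lemma nodes_antimono: "1 \<le> m \<Longrightarrow> m \<le> l \<Longrightarrow> l \<le> N \<Longrightarrow> x l \<le> x m"
  using nodes_decreasing[of m l] by (cases "m = l") auto

lemma tilt_w_pos: "j \<in> {1..N} \<Longrightarrow> 0 < tilt_w N x r t j"
  unfolding tilt_w_def using masses_pos by (auto intro!: divide_pos_pos sum_pos)

lemma tilt_w_le:
  assumes "a \<in> {1..N}" "b \<in> {1..N}"
  shows "tilt_w N x r t b \<le> inv_min_mass * exp (2 * t * (x b - x a)) * tilt_w N x r t a"
proof -
  define Z where "Z = (\<Sum>k=1..N. r k * exp (2 * t * x k))"
  have "0 < Z"
    unfolding Z_def using assms masses_pos by (intro sum_pos) auto
  have "r b \<le> 1"
    using assms(2) masses_pos masses_sum member_le_sum[of b "{1..N}" r] by (auto simp: less_imp_le)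
  have "Min (r ` {1..N}) \<le> r a" "0 < Min (r ` {1..N})"
    using assms(1) masses_pos by auto
  then have "1 \<le> inv_min_mass * r a"
    by (simp add: inv_min_mass_def)
  have "r b * exp (2 * t * x b) \<le> exp (2 * t * x b)"
    using \<open>r b \<le> 1\<close> by simp
  also have "\<dots> = exp (2 * t * (x b - x a)) * exp (2 * t * x a)"
    by (simp add: mult_exp_exp algebra_simps)
  also have "\<dots> \<le> exp (2 * t * (x b - x a)) * (exp (2 * t * x a) * (inv_min_mass * r a))"
    using \<open>1 \<le> inv_min_mass * r a\<close> by (intro mult_left_mono) auto
  finally have "r b * exp (2 * t * x b) \<le> inv_min_mass * exp (2 * t * (x b - x a)) * (r a * exp (2 * t * x a))"
    by (simp add: mult_ac)
  then have "r b * exp (2 * t * x b) / Z \<le> inv_min_mass * exp (2 * t * (x b - x a)) * (r a * exp (2 * t * x a)) / Z"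
    using \<open>0 < Z\<close> by (intro divide_right_mono) auto
  then show ?thesis
    unfolding tilt_w_def Z_def[symmetric] by simp
qed

lemma quasi_decreasing_weights_tilt_w:
  assumes "0 \<le> t"
  shows "quasi_decreasing_weights N x (tilt_w N x r t) inv_min_mass"
proof unfold_locales
  show "inj_on x {1..N}"
  proof (rule inj_onI)
    fix a b assume "a \<in> {1..N}" "b \<in> {1..N}" "x a = x b"
    then show "a = b"
      using nodes_decreasing[of a b] nodes_decreasing[of b a] by (cases a b rule: linorder_cases) auto
  qed
  show "0 < tilt_w N x r t j" if "j \<in> {1..N}" for j
    using that by (rule tilt_w_pos)
  show "tilt_w N x r t b \<le> inv_min_mass * tilt_w N x r t a" if "1 \<le> a" "a \<le> b" "b \<le> N" for a b
  proof -
    have "exp (2 * t * (x b - x a)) \<le> 1"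
      using assms nodes_antimono[OF that] by (simp add: mult_nonneg_nonpos)
    have "tilt_w N x r t b \<le> inv_min_mass * exp (2 * t * (x b - x a)) * tilt_w N x r t a"
      using that by (intro tilt_w_le) auto
    also have "\<dots> \<le> inv_min_mass * 1 * tilt_w N x r t a"
      using \<open>exp _ \<le> 1\<close> that inv_min_mass_pos tilt_w_pos[of a t]
      by (intro mult_right_mono mult_left_mono) auto
    finally show ?thesis
      by simp
  qed
qed

lemma tilt_w_le_beyond:
  assumes "0 \<le> t" "1 \<le> j" "j < l" "l \<le> N"
  shows "tilt_w N x r t l \<le> inv_min_mass * exp (2 * t * (x (Suc j) - x j)) * tilt_w N x r t j"
proof -
  have "tilt_w N x r t l \<le> inv_min_mass * exp (2 * t * (x l - x j)) * tilt_w N x r t j"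
    using assms by (intro tilt_w_le) auto
  also have "\<dots> \<le> inv_min_mass * exp (2 * t * (x (Suc j) - x j)) * tilt_w N x r t j"
    using assms nodes_antimono[of "Suc j" l] inv_min_mass_pos tilt_w_pos[of j t]
    by (intro mult_right_mono mult_left_mono) (auto intro!: mult_left_mono)
  finally show ?thesis .
qed

lemma tilt_w_le_before:
  assumes "0 \<le> t" "1 \<le> l" "l < j" "j \<le> N"
  shows "tilt_w N x r t j \<le> inv_min_mass * exp (2 * t * (x j - x (j - 1))) * tilt_w N x r t l"
proof -
  have "tilt_w N x r t j \<le> inv_min_mass * exp (2 * t * (x j - x l)) * tilt_w N x r t l"
    using assms by (intro tilt_w_le) auto
  also have "\<dots> \<le> inv_min_mass * exp (2 * t * (x j - x (j - 1))) * tilt_w N x r t l"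
    using assms nodes_antimono[of l "j - 1"] inv_min_mass_pos tilt_w_pos[of l t]
    by (intro mult_right_mono mult_left_mono) (auto intro!: mult_left_mono)
  finally show ?thesis .
qed

lemma abs_jacobi_b_tilt_w_sub_node_le:
  assumes "0 \<le> t" "j \<in> {1..N}"
  shows "\<bar>jacobi_b N x (tilt_w N x r t) j - x j\<bar> \<le>
    jacobi_b_rate_const * ((if j < N then exp (2 * t * (x (j + 1) - x j)) else 0)
      + (if j > 1 then exp (2 * t * (x j - x (j - 1))) else 0))"
proof -
  interpret quasi_decreasing_weights N x "tilt_w N x r t" inv_min_mass
    using assms(1) by (rule quasi_decreasing_weights_tilt_w)
  define E1 where "E1 = (if j < N then exp (2 * t * (x (j + 1) - x j)) else 0)"
  define E2 where "E2 = (if j > 1 then exp (2 * t * (x j - x (j - 1))) else 0)"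
  define n where "n = j - 1"
  have n: "j = Suc n" "n < N"
    using assms(2) by (auto simp: n_def)
  have "0 < inv_min_mass"
    using n inv_min_mass_pos by simp
  have "\<bar>jacobi_b N x (tilt_w N x r t) j - x j\<bar> \<le>
      jacobi_b_const N x inv_min_mass n * (inv_min_mass * E1 + inv_min_mass * E2)"
    unfolding n(1)
  proof (rule abs_jacobi_b_sub_node_le)
    show "tilt_w N x r t l \<le> inv_min_mass * E1 * tilt_w N x r t (Suc n)" if "l \<in> {Suc (Suc n)..N}" for l
      using that tilt_w_le_beyond[OF assms(1), of "Suc n" l] by (auto simp: E1_def n)
    show "tilt_w N x r t (Suc n) \<le> inv_min_mass * E2 * tilt_w N x r t l" if "l \<in> {1..n}" for l
      using that tilt_w_le_before[OF assms(1), of l "Suc n"] n by (auto simp: E2_def)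
  qed (use n \<open>0 < inv_min_mass\<close> in \<open>auto simp: E1_def E2_def\<close>)
  also have "\<dots> = inv_min_mass * jacobi_b_const N x inv_min_mass n * (E1 + E2)"
    by (simp add: algebra_simps)
  also have "\<dots> \<le> jacobi_b_rate_const * (E1 + E2)"
    unfolding jacobi_b_rate_const_def using \<open>0 < inv_min_mass\<close> n(2)
    by (intro mult_right_mono mult_left_mono member_le_sum jacobi_b_const_nonneg)
      (auto simp: E1_def E2_def)
  finally show ?thesis
    by (simp only: E1_def E2_def)
qed

lemma abs_jacobi_a_tilt_w_le:
  assumes "0 \<le> t" "j \<in> {1..N - 1}"
  shows "\<bar>jacobi_a N x (tilt_w N x r t) j\<bar> \<le>
    jacobi_a_rate_const * ((if j + 2 \<le> N then exp (t * (x (j + 2) - x (j + 1))) else 0)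
      + exp (t * (x (j + 1) - x j))
      + (if j > 1 then exp (t * (x j - x (j - 1))) else 0))"
proof -
  interpret quasi_decreasing_weights N x "tilt_w N x r t" inv_min_mass
    using assms(1) by (rule quasi_decreasing_weights_tilt_w)
  have "0 < N"
    using assms(2) by auto
  then have "0 < inv_min_mass"
    by (rule inv_min_mass_pos)
  have "0 \<le> jacobi_a_rate_const"
    unfolding jacobi_a_rate_const_def using \<open>0 < inv_min_mass\<close>
    by (intro mult_nonneg_nonneg sum_nonneg jacobi_a_const_nonneg) auto
  have "\<bar>jacobi_a N x (tilt_w N x r t) j\<bar> \<le>
      jacobi_a_const N x inv_min_mass j * sqrt (inv_min_mass * exp (2 * t * (x (Suc j) - x j)))"
    using assms tilt_w_le_beyond[OF assms(1), of j] \<open>0 < inv_min_mass\<close>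
    by (intro abs_jacobi_a_le) auto
  also have "exp (2 * t * (x (Suc j) - x j)) = (exp (t * (x (j + 1) - x j)))\<^sup>2"
    by (simp add: power2_eq_square mult_exp_exp algebra_simps)
  also have "jacobi_a_const N x inv_min_mass j * sqrt (inv_min_mass * (exp (t * (x (j + 1) - x j)))\<^sup>2) =
      sqrt inv_min_mass * jacobi_a_const N x inv_min_mass j * exp (t * (x (j + 1) - x j))"
    by (simp add: real_sqrt_mult)
  also have "\<dots> \<le> jacobi_a_rate_const * exp (t * (x (j + 1) - x j))"
    unfolding jacobi_a_rate_const_def using \<open>0 < inv_min_mass\<close> assms(2)
    by (intro mult_right_mono mult_left_mono member_le_sum jacobi_a_const_nonneg) auto
  also have "\<dots> \<le> jacobi_a_rate_const * ((if j + 2 \<le> N then exp (t * (x (j + 2) - x (j + 1))) else 0)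
      + exp (t * (x (j + 1) - x j))
      + (if j > 1 then exp (t * (x j - x (j - 1))) else 0))"
    using \<open>0 \<le> jacobi_a_rate_const\<close> by (intro mult_left_mono) auto
  finally show ?thesis .
qed

end

theorem theorem2p6:
  fixes N :: nat and x r :: "nat \<Rightarrow> real"
  assumes "N \<ge> 2"
    and "\<And>i j. 1 \<le> i \<Longrightarrow> i < j \<Longrightarrow> j \<le> N \<Longrightarrow> x i > x j"
    and "\<And>j. 1 \<le> j \<Longrightarrow> j \<le> N \<Longrightarrow> r j > 0"
    and "(\<Sum>j=1..N. r j) = 1"
  shows "\<exists>C3 C4. \<forall>t\<ge>0.
     (\<forall>j\<in>{1..N}. \<bar>jacobi_b N x (tilt_w N x r t) j - x j\<bar> \<le>
        C3 * ((if j < N then exp (2 * t * (x (j + 1) - x j)) else 0)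
            + (if j > 1 then exp (2 * t * (x j - x (j - 1))) else 0)))
   \<and> (\<forall>j\<in>{1..N - 1}. \<bar>jacobi_a N x (tilt_w N x r t) j\<bar> \<le>
        C4 * ((if j + 2 \<le> N then exp (t * (x (j + 2) - x (j + 1))) else 0)
            + exp (t * (x (j + 1) - x j))
            + (if j > 1 then exp (t * (x j - x (j - 1))) else 0)))"
proof -
  interpret tilted_measure N x r
    using assms(2-4) by unfold_locales auto
  show ?thesis
    using abs_jacobi_b_tilt_w_sub_node_le abs_jacobi_a_tilt_w_le by blast
qed

end
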